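(* Let $G$ be an $n\times n$ Game of Primes grid with $n\ge 2$ (defined in the context), and let $c$ be a corner cell of $G$ at least one of whose neighbors contains a prime number. If $c$ is excited on some day $t$, then $c$ is excited on every day $t'\ge t$.
   Context: A Game of Primes (GOPM) grid of dimension $n$ is an $n\times n$ grid whose cells are filled with the $n^2$ natural numbers $a, a+d, a+2d,\dots,a+(n^2-1)d$ (for fixed integers $a\ge 1$, $d\ge 1$) in snake-like (boustrophedon) order: the first row is filled left to right starting with $a$ in the top-left cell, the second row right to left, the third row left to right, and so on. Two distinct cells are neighbors if they are adjacent horizontally, vertically or diagonally (so a corner cell has exactly 3 neighbors). Each cell is in one of two states, excited or dormant; a configuration ("day") assigns a state to every cell. For a configuration $s$ and a cell $c$, let $N_s(c)$ be the number of neighbors of $c$ that contain a prime number or are excited in $s$ (or both). The update map $F$ sends $s$ to $F(s)$ where: a cell dormant in $s$ becomes excited iff $N_s(c)\ge 3$ (otherwise stays dormant); a cell excited in $s$ becomes dormant iff $N_s(c)\ge 4$ or $N_s(c)=0$ (otherwise stays excited). Day $0$ has all cells dormant, and day $t+1$ is $F$ applied to day $t$. *)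

theory Defs
  imports "HOL-Computational_Algebra.Primes"
begin

text \<open>Cells of an n x n grid are pairs (i, j) with i < n (row, counted from the top, 0-based)
  and j < n (column, counted from the left, 0-based).\<close>

type_synonym cell = "nat \<times> nat"

definition cells :: "nat \<Rightarrow> cell set" where
  "cells n = {(i, j). i < n \<and> j < n}"

definition snake_pos :: "nat \<Rightarrow> cell \<Rightarrow> nat" where
  "snake_pos n c = (let (i, j) = c in i * n + (if even i then j else n - 1 - j))"

definition gopm_val :: "nat \<Rightarrow> nat \<Rightarrow> nat \<Rightarrow> cell \<Rightarrow> nat" where
  "gopm_val n a d c = a + snake_pos n c * d"

definition neighbors :: "nat \<Rightarrow> cell \<Rightarrow> cell set" where
  "neighbors n c = {c' \<in> cells n. c' \<noteq> c \<and>
      (let (i, j) = c; (i', j') = c' in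
        i' \<le> i + 1 \<and> i \<le> i' + 1 \<and> j' \<le> j + 1 \<and> j \<le> j' + 1)}"

text \<open>A configuration (day): True = excited, False = dormant.\<close>
type_synonym config = "cell \<Rightarrow> bool"

definition Ncount :: "nat \<Rightarrow> nat \<Rightarrow> nat \<Rightarrow> config \<Rightarrow> cell \<Rightarrow> nat" where
  "Ncount n a d s c = card {c' \<in> neighbors n c. prime (gopm_val n a d c') \<or> s c'}"

definition gopm_step :: "nat \<Rightarrow> nat \<Rightarrow> nat \<Rightarrow> config \<Rightarrow> config" where
  "gopm_step n a d s c =
     (let k = Ncount n a d s c in
      if s c then \<not> (k \<ge> 4 \<or> k = 0) else k \<ge> 3)"

definition gopm_day :: "nat \<Rightarrow> nat \<Rightarrow> nat \<Rightarrow> nat \<Rightarrow> config" where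
  "gopm_day n a d t = (gopm_step n a d ^^ t) (\<lambda>_. False)"

definition corner :: "nat \<Rightarrow> cell \<Rightarrow> bool" where
  "corner n c \<longleftrightarrow> c \<in> {(0, 0), (0, n - 1), (n - 1, 0), (n - 1, n - 1)}"

end

theory Submission
  imports Defs
begin

(* A corner cell has at most three neighbours, so N_s(c) <= 3 in every configuration s, and a
   neighbour holding a prime makes N_s(c) >= 1.  An excited corner therefore never meets the
   condition N_s(c) >= 4 or N_s(c) = 0 for becoming dormant. *)

lemma finite_neighbors: "finite (neighbors n c)"
  by (rule finite_subset[of _ "{..<n} \<times> {..<n}"]) (auto simp: neighbors_def cells_def)

lemma card_neighbors_corner:
  assumes "n \<ge> 2" and "corner n c"
  shows "card (neighbors n c) \<le> 3"
proof -
  have "c = (0, 0) \<or> c = (0, n - 1) \<or> c = (n - 1, 0) \<or> c = (n - 1, n - 1)"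
    using assms(2) by (simp add: corner_def)
  then obtain x y z where "neighbors n c \<subseteq> {x, y, z}"
  proof (elim disjE)
    assume "c = (0, 0)"
    then show ?thesis
      by (intro that[of "(0, 1)" "(1, 0)" "(1, 1)"]) (auto simp: neighbors_def cells_def)
  next
    assume "c = (0, n - 1)"
    then show ?thesis using assms(1)
      by (intro that[of "(0, n - 2)" "(1, n - 2)" "(1, n - 1)"]) (auto simp: neighbors_def cells_def)
  next
    assume "c = (n - 1, 0)"
    then show ?thesis using assms(1)
      by (intro that[of "(n - 2, 0)" "(n - 2, 1)" "(n - 1, 1)"]) (auto simp: neighbors_def cells_def)
  next
    assume "c = (n - 1, n - 1)"
    then show ?thesis using assms(1)
      by (intro that[of "(n - 2, n - 2)" "(n - 2, n - 1)" "(n - 1, n - 2)"])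
        (auto simp: neighbors_def cells_def)
  qed
  then have "card (neighbors n c) \<le> card {x, y, z}"
    by (simp add: card_mono)
  also have "\<dots> \<le> 3"
    by (simp add: card_insert_if)
  finally show ?thesis .
qed

lemma Ncount_le_card_neighbors: "Ncount n a d s c \<le> card (neighbors n c)"
  unfolding Ncount_def by (rule card_mono[OF finite_neighbors]) blast

lemma Ncount_pos_if_prime_neighbor:
  assumes "\<exists>c' \<in> neighbors n c. prime (gopm_val n a d c')"
  shows "Ncount n a d s c > 0"
  using assms finite_neighbors[of n c] unfolding Ncount_def
  by (subst card_gt_0_iff) auto

lemma gopm_step_excited_iff:
  assumes "s c"
  shows "gopm_step n a d s c \<longleftrightarrow> 0 < Ncount n a d s c \<and> Ncount n a d s c \<le> 3"
  using assms unfolding gopm_step_def Let_def by auto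

lemma gopm_day_Suc: "gopm_day n a d (Suc t) = gopm_step n a d (gopm_day n a d t)"
  unfolding gopm_day_def by simp

lemma gopm_day_excited_persists:
  assumes stable: "\<And>s. s c \<Longrightarrow> gopm_step n a d s c"
    and "gopm_day n a d t c" and "t \<le> t'"
  shows "gopm_day n a d t' c"
  using \<open>t \<le> t'\<close>
proof (induction t' rule: dec_induct)
  case base
  show ?case using \<open>gopm_day n a d t c\<close> .
next
  case (step m)
  then show ?case by (simp add: gopm_day_Suc stable)
qed

lemma gopm_step_keeps_excited_corner:
  assumes "n \<ge> 2" and "corner n c"
    and "\<exists>c' \<in> neighbors n c. prime (gopm_val n a d c')"
    and "s c"
  shows "gopm_step n a d s c"
proof -
  have "Ncount n a d s c \<le> 3"
    using Ncount_le_card_neighbors card_neighbors_corner[OF assms(1,2)] order_trans by blast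
  then show ?thesis
    using assms(4) Ncount_pos_if_prime_neighbor[OF assms(3)] gopm_step_excited_iff by blast
qed

theorem theorem4p3:
  fixes n a d t t' :: nat and c :: cell
  assumes "n \<ge> 2" and "a \<ge> 1" and "d \<ge> 1"
    and "corner n c"
    and "\<exists>c' \<in> neighbors n c. prime (gopm_val n a d c')"
    and "gopm_day n a d t c"
    and "t \<le> t'"
  shows "gopm_day n a d t' c"
  using gopm_day_excited_persists gopm_step_keeps_excited_corner assms(1,4,5,6,7) by blast

end
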